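(* Let $\mathbf{Z}=\{Z_{\mathbf{u}}\}_{\mathbf{u}\in\mathbb{R}^2}$ be a max-stable random field with unit Fréchet margins $F(z)=\exp(-z^{-1})$, $z>0$, and let $\mathbf{x}=\{\mathbf{x}_1,\ldots,\mathbf{x}_k\}$ and $\mathbf{y}=\{\mathbf{y}_1,\ldots,\mathbf{y}_s\}$ be disjoint sets of locations in $\mathbb{R}^2$. With $M(\mathbf{x})=\bigvee_{i=1}^k Z_{\mathbf{x}_i}$, $M(\mathbf{y})=\bigvee_{j=1}^s Z_{\mathbf{y}_j}$ and $$\nu^{\alpha,\beta}(\mathbf{x},\mathbf{y})=\tfrac12 E\left|F^{\alpha}(M(\mathbf{x}))-F^{\beta}(M(\mathbf{y}))\right|,\qquad \alpha,\beta>0,$$ we have, for all $\alpha,\beta>0$: 1. $0\le \nu^{\alpha,\beta}(\mathbf{x},\mathbf{y})\le \tfrac12$; 2. $\displaystyle \nu^{\alpha,\alpha}(\mathbf{x},\mathbf{y})=\frac{\epsilon_{\mathbf{x}\cup\mathbf{y}}}{\alpha+\epsilon_{\mathbf{x}\cup\mathbf{y}}}-\frac12\left(\frac{\epsilon_{\mathbf{x}}}{\alpha+\epsilon_{\mathbf{x}}}+\frac{\epsilon_{\mathbf{y}}}{\alpha+\epsilon_{\mathbf{y}}}\right)$, where $\epsilon_{\mathbf{x}}$, $\epsilon_{\mathbf{y}}$, $\epsilon_{\mathbf{x}\cup\mathbf{y}}$ are the extremal coefficients of the regions $\mathbf{x}$, $\mathbf{y}$, $\mathbf{x}\cup\ma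thbf{y}$.
   Context: For a finite set of locations $\mathbf{w}=\{\mathbf{w}_1,\ldots,\mathbf{w}_m\}$, the dependence function is $V_{\mathbf{w}}(z_1,\ldots,z_m)=-\ln P(Z_{\mathbf{w}_1}\le z_1,\ldots,Z_{\mathbf{w}_m}\le z_m)$, $z_i>0$, and the extremal coefficient is $\epsilon_{\mathbf{w}}=V_{\mathbf{w}}(1,\ldots,1)$. In particular $\epsilon_{\mathbf{x}\cup\mathbf{y}}=V_{\mathbf{x},\mathbf{y}}(1,\ldots,1)$, the dependence function of the joint vector $(Z_{\mathbf{x}_1},\ldots,Z_{\mathbf{x}_k},Z_{\mathbf{y}_1},\ldots,Z_{\mathbf{y}_s})$ evaluated at all ones. *)

theory Defs
  imports "HOL-Probability.Probability"
begin

definition frechet_cdf :: "real \<Rightarrow> real" where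
  "frechet_cdf z = (if z > 0 then exp (- 1 / z) else 0)"

definition joint_cdf :: "'a measure \<Rightarrow> ('l \<Rightarrow> 'a \<Rightarrow> real) \<Rightarrow> 'l set \<Rightarrow> ('l \<Rightarrow> real) \<Rightarrow> real" where
  "joint_cdf M Z w z = measure M {\<omega> \<in> space M. \<forall>u\<in>w. Z u \<omega> \<le> z u}"

text \<open>Max-stable random field: all finite-dimensional distributions G_w satisfy
  G_w(a_n z + b_n)^n = G_w(z) for normalising functions a_n > 0, b_n, i.e. the
  normalised maximum of n iid copies has the same finite-dimensional laws.\<close>
definition max_stable :: "'a measure \<Rightarrow> ('l \<Rightarrow> 'a \<Rightarrow> real) \<Rightarrow> bool" where
  "max_stable M Z \<longleftrightarrow> (\<forall>u. Z u \<in> borel_measurable M) \<and>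
     (\<exists>a b :: nat \<Rightarrow> 'l \<Rightarrow> real. \<forall>n\<ge>1. (\<forall>u. a n u > 0) \<and>
        (\<forall>w z. finite w \<longrightarrow>
           joint_cdf M Z w (\<lambda>u. a n u * z u + b n u) ^ n = joint_cdf M Z w z))"

definition dependence_fun :: "'a measure \<Rightarrow> ('l \<Rightarrow> 'a \<Rightarrow> real) \<Rightarrow> 'l set \<Rightarrow> ('l \<Rightarrow> real) \<Rightarrow> real" where
  "dependence_fun M Z w z = - ln (joint_cdf M Z w z)"

definition extremal_coeff :: "'a measure \<Rightarrow> ('l \<Rightarrow> 'a \<Rightarrow> real) \<Rightarrow> 'l set \<Rightarrow> real" where
  "extremal_coeff M Z w = dependence_fun M Z w (\<lambda>_. 1)"

definition region_max :: "('l \<Rightarrow> 'a \<Rightarrow> real) \<Rightarrow> 'l set \<Rightarrow> 'a \<Rightarrow> real" where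
  "region_max Z w \<omega> = Max ((\<lambda>u. Z u \<omega>) ` w)"

definition madogram_nu :: "'a measure \<Rightarrow> ('l \<Rightarrow> 'a \<Rightarrow> real) \<Rightarrow> real \<Rightarrow> real \<Rightarrow> 'l set \<Rightarrow> 'l set \<Rightarrow> real" where
  "madogram_nu M Z \<alpha> \<beta> x y = 1/2 * (\<integral>\<omega>. \<bar>frechet_cdf (region_max Z x \<omega>) powr \<alpha>
                                         - frechet_cdf (region_max Z y \<omega>) powr \<beta>\<bar> \<partial>M)"

end

theory Submission
  imports Defs
begin

text \<open>Applied to single locations, max-stability with unit Frechet margins forces the
  normalisation \<open>a\<^sub>n = n\<close>, \<open>b\<^sub>n = 0\<close>. Hence \<open>G(t) = P(Z\<^sub>u \<le> t, u \<in> w)\<close> satisfies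
  \<open>G(n t)\<^sup>n = G(t)\<close>, which pins \<open>G\<close> down on the positive rationals as \<open>exp(-\<epsilon>\<^sub>w / t)\<close>, and
  monotonicity extends this to all \<open>t > 0\<close>: \<open>M(w)\<close> is Frechet with scale \<open>\<epsilon>\<^sub>w\<close>.
  The layer-cake formula then gives \<open>E F\<^sup>\<gamma>(M(w)) = \<epsilon>\<^sub>w / (\<gamma> + \<epsilon>\<^sub>w)\<close>. For \<open>\<beta> = \<alpha>\<close>,
  \<open>|a - b| = 2 max a b - a - b\<close> and \<open>max (F\<^sup>\<alpha>(M(x))) (F\<^sup>\<alpha>(M(y))) = F\<^sup>\<alpha>(M(x \<union> y))\<close> reduce the
  madogram to three such expectations.\<close>

lemma frechet_cdf_nonneg: "0 \<le> frechet_cdf z"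
  by (simp add: frechet_cdf_def)

lemma frechet_cdf_le_1: "frechet_cdf z \<le> 1"
  by (simp add: frechet_cdf_def)

lemma mono_frechet_cdf: "mono frechet_cdf"
proof
  fix a b :: real
  assume "a \<le> b"
  then show "frechet_cdf a \<le> frechet_cdf b"
    by (cases "a > 0") (auto simp: frechet_cdf_def frac_le)
qed

lemma borel_measurable_frechet_cdf [measurable]: "frechet_cdf \<in> borel_measurable borel"
  unfolding frechet_cdf_def[abs_def] by measurable

lemma frechet_cdf_powr_le_1: "\<gamma> \<ge> 0 \<Longrightarrow> frechet_cdf z powr \<gamma> \<le> 1"
  using frechet_cdf_nonneg[of z] frechet_cdf_le_1[of z] by (intro powr_le1) auto

lemma mono_frechet_cdf_powr: "\<gamma> \<ge> 0 \<Longrightarrow> mono (\<lambda>z. frechet_cdf z powr \<gamma>)"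
  using mono_frechet_cdf frechet_cdf_nonneg by (auto intro!: monoI powr_mono2 dest: monoD)

lemma frechet_cdf_power_eq_imp_eq:
  assumes "n \<ge> 1" and "frechet_cdf y ^ n = frechet_cdf z" and "z > 0"
  shows "y = real n * z"
proof -
  have "y > 0"
    using assms by (cases "y > 0") (auto simp: frechet_cdf_def zero_power)
  then have "exp (- 1 / y) ^ n = exp (- 1 / z)"
    using assms by (simp add: frechet_cdf_def)
  then have "real n * (- 1 / y) = - 1 / z"
    by (simp only: exp_of_nat_mult[symmetric] exp_inj_iff)
  then show ?thesis
    using \<open>y > 0\<close> \<open>z > 0\<close> by (simp add: field_simps)
qed

lemma less_frechet_cdf_powr_iff:
  assumes "0 < s" "s < 1" and "\<gamma> > 0"
  shows "s < frechet_cdf m powr \<gamma> \<longleftrightarrow> \<gamma> / (- ln s) < m"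
proof (cases "m > 0")
  case False
  moreover have "\<gamma> / (- ln s) > 0"
    using assms by (simp add: divide_pos_neg)
  ultimately show ?thesis
    using assms by (simp add: frechet_cdf_def)
next
  case True
  have "frechet_cdf m powr \<gamma> = exp (- \<gamma> / m)"
    using True by (simp add: frechet_cdf_def powr_def)
  then have "s < frechet_cdf m powr \<gamma> \<longleftrightarrow> ln s < - \<gamma> / m"
    using assms by (metis exp_less_cancel_iff exp_ln)
  also have "\<dots> \<longleftrightarrow> \<gamma> < (- ln s) * m"
    using True by (simp add: field_simps) arith
  also have "\<dots> \<longleftrightarrow> \<gamma> / (- ln s) < m"
    using pos_divide_less_eq[of "- ln s" \<gamma> m] assms by (simp add: mult.commute)
  finally show ?thesis .
qed

lemma region_max_le_iff:
  assumes "finite w" "w \<noteq> {}"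
  shows "region_max Z w \<omega> \<le> c \<longleftrightarrow> (\<forall>u\<in>w. Z u \<omega> \<le> c)"
  using assms by (simp add: region_max_def)

lemma region_max_Un:
  assumes "finite x" "x \<noteq> {}" "finite y" "y \<noteq> {}"
  shows "region_max Z (x \<union> y) \<omega> = max (region_max Z x \<omega>) (region_max Z y \<omega>)"
  using assms by (simp add: region_max_def image_Un Max_Un)

lemma borel_measurable_region_max [measurable]:
  assumes "finite w" "\<And>u. Z u \<in> borel_measurable M"
  shows "region_max Z w \<in> borel_measurable M"
  unfolding region_max_def[abs_def] using assms by (intro borel_measurable_Max) auto

lemma mono_eq_on_pos_Rats:
  fixes g \<phi> :: "real \<Rightarrow> real"
  assumes "mono g" and g_Rats: "\<And>r. r \<in> \<rat> \<Longrightarrow> r > 0 \<Longrightarrow> g r = \<phi> r"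
    and "isCont \<phi> t" and "t > 0"
  shows "g t = \<phi> t"
proof -
  have near: "\<exists>d>0. \<forall>r. \<bar>r - t\<bar> < d \<longrightarrow> \<bar>\<phi> r - \<phi> t\<bar> < x" if "x > 0" for x
    using \<open>isCont \<phi> t\<close> that unfolding continuous_at_eps_delta dist_real_def by blast
  have "g t \<le> \<phi> t"
  proof (rule ccontr)
    assume "\<not> g t \<le> \<phi> t"
    then obtain d where "d > 0" and d: "\<And>r. \<bar>r - t\<bar> < d \<Longrightarrow> \<bar>\<phi> r - \<phi> t\<bar> < g t - \<phi> t"
      using near[of "g t - \<phi> t"] by auto
    obtain r where r: "r \<in> \<rat>" "t < r" "r < t + d"
      using Rats_dense_in_real[of t "t + d"] \<open>d > 0\<close> by auto
    have "g t \<le> g r"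
      using \<open>mono g\<close> r by (simp add: monoD)
    moreover have "\<phi> r < g t"
      using d[of r] r by auto
    ultimately show False
      using g_Rats[of r] r \<open>t > 0\<close> by simp
  qed
  moreover have "\<phi> t \<le> g t"
  proof (rule ccontr)
    assume "\<not> \<phi> t \<le> g t"
    then obtain d where "d > 0" and d: "\<And>r. \<bar>r - t\<bar> < d \<Longrightarrow> \<bar>\<phi> r - \<phi> t\<bar> < \<phi> t - g t"
      using near[of "\<phi> t - g t"] by auto
    obtain r where r: "r \<in> \<rat>" "max (t - d) (t / 2) < r" "r < t"
      using Rats_dense_in_real[of "max (t - d) (t / 2)" t] \<open>d > 0\<close> \<open>t > 0\<close> by auto
    have "g r \<le> g t"
      using \<open>mono g\<close> r by (simp add: monoD)
    moreover have "g t < \<phi> r"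
      using d[of r] r by auto
    ultimately show False
      using g_Rats[of r] r \<open>t > 0\<close> by simp
  qed
  ultimately show ?thesis
    by simp
qed

lemma (in prob_space) layer_cake_unit_interval:
  fixes V :: "'a \<Rightarrow> real"
  assumes [measurable]: "V \<in> borel_measurable M"
    and V_bounds: "\<And>\<omega>. \<omega> \<in> space M \<Longrightarrow> 0 \<le> V \<omega> \<and> V \<omega> \<le> 1"
    and tail: "\<And>s. 0 < s \<Longrightarrow> s < 1 \<Longrightarrow> prob {\<omega>\<in>space M. s < V \<omega>} = h s"
    and h_nonneg: "\<And>s. s \<in> {0..1} \<Longrightarrow> 0 \<le> h s"
    and h_integral: "(h has_integral I) {0..1}"
  shows "expectation V = I"
proof -
  interpret pair_sigma_finite M lborel
    by (simp add: pair_sigma_finite.intro lborel.sigma_finite_measure_axioms sigma_finite_measure_axioms)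
  define below where "below \<omega> s = ennreal (if 0 \<le> s \<and> s < V \<omega> then 1 else 0)" for \<omega> s
  have "integrable M V"
    by (rule integrable_const_bound[where B=1]) (use V_bounds in auto)
  then have "ennreal (expectation V) = (\<integral>\<^sup>+\<omega>. ennreal (V \<omega>) \<partial>M)"
    using V_bounds by (subst nn_integral_eq_integral) (auto intro!: AE_I2)
  also have "\<dots> = (\<integral>\<^sup>+\<omega>. (\<integral>\<^sup>+s. below \<omega> s \<partial>lborel) \<partial>M)"
  proof (rule nn_integral_cong)
    fix \<omega> assume "\<omega> \<in> space M"
    have "(\<integral>\<^sup>+s. below \<omega> s \<partial>lborel) = (\<integral>\<^sup>+s. indicator {0..<V \<omega>} s \<partial>lborel)"
      by (rule nn_integral_cong) (auto simp: below_def indicator_def)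
    then show "ennreal (V \<omega>) = (\<integral>\<^sup>+s. below \<omega> s \<partial>lborel)"
      using V_bounds[OF \<open>\<omega> \<in> space M\<close>] by simp
  qed
  also have "\<dots> = (\<integral>\<^sup>+s. (\<integral>\<^sup>+\<omega>. below \<omega> s \<partial>M) \<partial>lborel)"
    unfolding below_def by (rule Fubini'[symmetric]) measurable
  also have "\<dots> = (\<integral>\<^sup>+s. ennreal (h s) * indicator {0..1} s \<partial>lborel)"
  proof (rule nn_integral_cong_AE)
    have "AE s in lborel. s \<noteq> 0" "AE s in lborel. s \<noteq> (1::real)"
      by (rule AE_lborel_singleton)+
    then show "AE s in lborel. (\<integral>\<^sup>+\<omega>. below \<omega> s \<partial>M) = ennreal (h s) * indicator {0..1} s"
    proof eventually_elim
      case (elim s)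
      have "(\<integral>\<^sup>+\<omega>. below \<omega> s \<partial>M) = (\<integral>\<^sup>+\<omega>. indicator {\<omega>\<in>space M. 0 \<le> s \<and> s < V \<omega>} \<omega> \<partial>M)"
        by (rule nn_integral_cong) (auto simp: below_def indicator_def)
      also have "\<dots> = emeasure M {\<omega>\<in>space M. 0 \<le> s \<and> s < V \<omega>}"
        by (rule nn_integral_indicator) measurable
      moreover have "{\<omega>\<in>space M. 0 \<le> s \<and> s < V \<omega>} = (if 0 < s \<and> s < 1 then {\<omega>\<in>space M. s < V \<omega>} else {})"
        using elim by (cases "0 < s \<and> s < 1") (auto dest!: V_bounds)
      ultimately show ?case
        using tail[of s] elim by (cases "0 < s \<and> s < 1") (auto simp: emeasure_eq_measure indicator_def)
    qed
  qed
  also have "\<dots> = ennreal I"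
    by (rule nn_integral_has_integral_lebesgue'[OF h_nonneg h_integral])
  finally show ?thesis
    using has_integral_nonneg[OF h_integral h_nonneg] integral_nonneg_AE[of V M] V_bounds
    by (simp add: AE_I2)
qed

locale unit_frechet_max_stable = prob_space M
  for M :: "'a measure" and Z :: "'l \<Rightarrow> 'a \<Rightarrow> real" +
  assumes max_stable: "max_stable M Z"
    and marginal: "\<And>u z. z > 0 \<Longrightarrow> measure M {\<omega> \<in> space M. Z u \<omega> \<le> z} = frechet_cdf z"
begin

lemma borel_measurable_Z [measurable]: "Z u \<in> borel_measurable M"
  using max_stable by (simp add: max_stable_def)

lemma marginal_cdf: "prob {\<omega> \<in> space M. Z u \<omega> \<le> z} = frechet_cdf z"
proof (cases "z > 0")
  case False
  define p where "p = prob {\<omega> \<in> space M. Z u \<omega> \<le> z}"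
  have p_le: "p \<le> exp (- 1 / d)" if "d > 0" for d
  proof -
    have "p \<le> prob {\<omega> \<in> space M. Z u \<omega> \<le> d}"
      unfolding p_def using False that by (intro finite_measure_mono) (auto, measurable)
    then show ?thesis
      using marginal[OF that] that by (simp add: frechet_cdf_def)
  qed
  have "p = 0"
  proof (rule ccontr)
    assume "p \<noteq> 0"
    moreover have "p \<ge> 0" "p \<le> exp (- 1)"
      using p_le[of 1] by (simp_all add: p_def)
    moreover have "exp (- 1) < (1::real)"
      by simp
    ultimately have "0 < p" "p < 1"
      by linarith+
    define d where "d = - 1 / (2 * ln p)"  \<comment> \<open>for this \<open>d\<close> the bound reads \<open>p \<le> p\<^sup>2\<close>\<close>
    have "ln p < 0"
      using \<open>0 < p\<close> \<open>p < 1\<close> by simp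
    then have "d > 0" and d_inv: "- 1 / d = ln p + ln p"
      by (simp_all add: d_def divide_neg_neg)
    have "p \<le> exp (ln p + ln p)"
      using p_le[OF \<open>d > 0\<close>] unfolding d_inv .
    also have "\<dots> = p * p"
      using \<open>0 < p\<close> by (simp only: exp_add exp_ln)
    finally show False
      using \<open>0 < p\<close> \<open>p < 1\<close> by (simp add: mult_le_cancel_left1)
  qed
  then show ?thesis
    using False by (simp add: p_def frechet_cdf_def)
qed (rule marginal)

lemma joint_cdf_scale:
  assumes "n \<ge> 1" and "finite w"
  shows "joint_cdf M Z w (\<lambda>_. real n * t) ^ n = joint_cdf M Z w (\<lambda>_. t)"
proof -
  obtain a b :: "nat \<Rightarrow> 'l \<Rightarrow> real" where normalising: "\<And>n. n \<ge> 1 \<Longrightarrow> (\<forall>u. a n u > 0) \<and>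
      (\<forall>w z. finite w \<longrightarrow> joint_cdf M Z w (\<lambda>u. a n u * z u + b n u) ^ n = joint_cdf M Z w z)"
    using max_stable unfolding max_stable_def by blast
  note ab = conjunct2[OF normalising[OF \<open>n \<ge> 1\<close>], rule_format]
  have "frechet_cdf (a n u * z + b n u) ^ n = frechet_cdf z" for u z
    using ab[of "{u}" "\<lambda>_. z"] by (simp add: joint_cdf_def marginal_cdf)
  then have affine: "a n u * z + b n u = real n * z" if "z > 0" for u z
    using frechet_cdf_power_eq_imp_eq[OF \<open>n \<ge> 1\<close>] that by blast
  have "a n u = real n \<and> b n u = 0" for u
    using affine[of 1 u] affine[of 2 u] by simp
  then show ?thesis
    using ab[OF \<open>finite w\<close>, of "\<lambda>_. t"] by simp
qed

lemma joint_cdf_const_mono: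
  assumes "finite w" "s \<le> t"
  shows "joint_cdf M Z w (\<lambda>_. s) \<le> joint_cdf M Z w (\<lambda>_. t)"
  unfolding joint_cdf_def using assms by (intro finite_measure_mono) (auto, measurable)

lemma joint_cdf_one_pos:
  assumes "finite w"
  shows "joint_cdf M Z w (\<lambda>_. 1) > 0"
proof -
  define N where "N = card w + 1"
    \<comment> \<open>union bound: \<open>P(Z\<^sub>u > N for some u \<in> w) \<le> |w| (1 - exp(-1/N)) \<le> |w| / N < 1\<close>\<close>
  define A where "A = {\<omega> \<in> space M. \<forall>u\<in>w. Z u \<omega> \<le> real N}"
  have A_events [measurable]: "A \<in> events"
    unfolding A_def using assms by measurable
  have "space M - A = (\<Union>u\<in>w. {\<omega> \<in> space M. real N < Z u \<omega>})"
    by (auto simp: A_def)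
  then have "prob (space M - A) \<le> (\<Sum>u\<in>w. prob {\<omega> \<in> space M. real N < Z u \<omega>})"
    using assms by (simp, intro finite_measure_subadditive_finite) auto
  also have "\<dots> \<le> (\<Sum>u\<in>w. 1 / real N)"
  proof (rule sum_mono)
    fix u
    have "{\<omega> \<in> space M. real N < Z u \<omega>} = space M - {\<omega> \<in> space M. Z u \<omega> \<le> real N}"
      by auto
    then have "prob {\<omega> \<in> space M. real N < Z u \<omega>} = 1 - exp (- 1 / real N)"
      using marginal_cdf[of u "real N"] by (simp add: prob_compl N_def frechet_cdf_def)
    then show "prob {\<omega> \<in> space M. real N < Z u \<omega>} \<le> 1 / real N"
      using exp_ge_add_one_self[of "- 1 / real N"] by simp
  qed
  also have "\<dots> < 1"
    by (simp add: N_def)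
  finally have "joint_cdf M Z w (\<lambda>_. real N) > 0"
    using prob_compl[OF A_events] by (simp add: A_def joint_cdf_def)
  then show ?thesis
    using joint_cdf_scale[of N w 1] assms by (metis N_def le_add2 mult.right_neutral zero_less_power)
qed

lemma extremal_coeff_pos:
  assumes "finite w" "w \<noteq> {}"
  shows "extremal_coeff M Z w > 0"
proof -
  obtain u where "u \<in> w"
    using assms by auto
  then have "joint_cdf M Z w (\<lambda>_. 1) \<le> prob {\<omega> \<in> space M. Z u \<omega> \<le> 1}"
    unfolding joint_cdf_def using assms by (intro finite_measure_mono) (auto, measurable)
  also have "\<dots> = exp (- 1)"
    using marginal_cdf[of u 1] by (simp add: frechet_cdf_def)
  also have "\<dots> < 1"
    by simp
  finally show ?thesis
    using joint_cdf_one_pos[OF assms(1)] by (simp add: extremal_coeff_def dependence_fun_def)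
qed

lemma joint_cdf_const_Rats:
  assumes "finite w" "r \<in> \<rat>" "r > 0"
  shows "joint_cdf M Z w (\<lambda>_. r) = exp (- extremal_coeff M Z w / r)"
proof -
  define g where "g t = joint_cdf M Z w (\<lambda>_. t)" for t
  define e where "e = extremal_coeff M Z w"
  obtain m n :: nat where "n \<noteq> 0" and "\<bar>r\<bar> = real m / real n"
    using Rats_abs_nat_div_natE[OF \<open>r \<in> \<rat>\<close>] by metis
  then have "n \<ge> 1" and r: "r = real m / real n"
    using \<open>r > 0\<close> by auto
  then have "m \<ge> 1"
    using \<open>r > 0\<close> by (cases m) auto
  have "g 1 = exp (- e)"
    using joint_cdf_one_pos[OF assms(1)] by (simp add: g_def e_def extremal_coeff_def dependence_fun_def)
  have "g r ^ m = g (1 / real n)"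
    using joint_cdf_scale[OF \<open>m \<ge> 1\<close> assms(1), of "1 / real n"] by (simp add: g_def r)
  also have "\<dots> = g 1 ^ n"
    using joint_cdf_scale[OF \<open>n \<ge> 1\<close> assms(1), of "1 / real n"] \<open>n \<ge> 1\<close> by (simp add: g_def)
  also have "\<dots> = exp (- e) ^ n"
    using \<open>g 1 = exp (- e)\<close> by simp
  also have "\<dots> = exp (- e / r) ^ m"
    using \<open>m \<ge> 1\<close> \<open>n \<ge> 1\<close> by (simp add: r exp_of_nat_mult[symmetric])
  finally show ?thesis
    using \<open>m \<ge> 1\<close> by (auto simp: g_def e_def joint_cdf_def intro: power_eq_imp_eq_base)
qed

lemma joint_cdf_const:
  assumes "finite w" "t > 0"
  shows "joint_cdf M Z w (\<lambda>_. t) = exp (- extremal_coeff M Z w / t)"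
proof (rule mono_eq_on_pos_Rats[where g = "\<lambda>t. joint_cdf M Z w (\<lambda>_. t)"
                                   and \<phi> = "\<lambda>t. exp (- extremal_coeff M Z w / t)"])
  show "mono (\<lambda>t. joint_cdf M Z w (\<lambda>_. t))"
    using assms(1) by (auto intro: monoI joint_cdf_const_mono)
  show "isCont (\<lambda>t. exp (- extremal_coeff M Z w / t)) t"
    using assms(2) by (intro continuous_intros) auto
qed (use assms joint_cdf_const_Rats in auto)

lemma prob_less_frechet_cdf_powr_region_max:
  assumes "finite w" "w \<noteq> {}" "\<gamma> > 0" "0 < s" "s < 1"
  shows "prob {\<omega>\<in>space M. s < frechet_cdf (region_max Z w \<omega>) powr \<gamma>}
           = 1 - s powr (extremal_coeff M Z w / \<gamma>)"
proof -
  define c where "c = \<gamma> / (- ln s)"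
  have "c > 0"
    using assms by (simp add: c_def divide_pos_neg)
  have "{\<omega>\<in>space M. s < frechet_cdf (region_max Z w \<omega>) powr \<gamma>}
          = space M - {\<omega>\<in>space M. \<forall>u\<in>w. Z u \<omega> \<le> c}"
    using assms by (auto simp: less_frechet_cdf_powr_iff c_def region_max_le_iff[symmetric] not_le)
  then have "prob {\<omega>\<in>space M. s < frechet_cdf (region_max Z w \<omega>) powr \<gamma>}
               = 1 - exp (- extremal_coeff M Z w / c)"
    using assms \<open>c > 0\<close> prob_compl[of "{\<omega>\<in>space M. \<forall>u\<in>w. Z u \<omega> \<le> c}"] joint_cdf_const[of w c]
    by (simp add: joint_cdf_def)
  also have "- extremal_coeff M Z w / c = extremal_coeff M Z w / \<gamma> * ln s"
    by (simp add: c_def)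
  finally show ?thesis
    using assms by (simp add: powr_def)
qed

lemma expectation_frechet_cdf_powr_region_max:
  assumes "finite w" "w \<noteq> {}" "\<gamma> > 0"
  shows "expectation (\<lambda>\<omega>. frechet_cdf (region_max Z w \<omega>) powr \<gamma>)
           = extremal_coeff M Z w / (\<gamma> + extremal_coeff M Z w)"
proof (rule layer_cake_unit_interval)
  define p where "p = extremal_coeff M Z w / \<gamma>"
  have "p > 0"
    using extremal_coeff_pos[OF assms(1,2)] assms by (simp add: p_def)
  have "((\<lambda>s. 1 - s powr p) has_integral (1 - 1 / (p + 1))) {0..1}"
    using has_integral_diff[OF has_integral_const_real[of 1 0 1] has_integral_powr_from_0[of p 1]]
      \<open>p > 0\<close> by simp
  moreover have "1 - 1 / (p + 1) = extremal_coeff M Z w / (\<gamma> + extremal_coeff M Z w)"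
    using \<open>p > 0\<close> assms by (simp add: p_def field_simps)
  ultimately show "((\<lambda>s. 1 - s powr p) has_integral
      extremal_coeff M Z w / (\<gamma> + extremal_coeff M Z w)) {0..1}"
    by simp
  show "prob {\<omega>\<in>space M. s < frechet_cdf (region_max Z w \<omega>) powr \<gamma>} = 1 - s powr p"
    if "0 < s" "s < 1" for s
    using prob_less_frechet_cdf_powr_region_max assms that by (simp add: p_def)
  show "0 \<le> 1 - s powr p" if "s \<in> {0..1}" for s
    using that \<open>p > 0\<close> by (simp add: powr_le1)
qed (use assms in \<open>auto simp: frechet_cdf_powr_le_1\<close>)

lemma integrable_frechet_cdf_powr_region_max:
  assumes "finite w" "\<gamma> \<ge> 0"
  shows "integrable M (\<lambda>\<omega>. frechet_cdf (region_max Z w \<omega>) powr \<gamma>)"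
proof (rule integrable_const_bound[where B=1])
  show "(\<lambda>\<omega>. frechet_cdf (region_max Z w \<omega>) powr \<gamma>) \<in> borel_measurable M"
    using assms by measurable
qed (use assms in \<open>auto simp: frechet_cdf_powr_le_1\<close>)

lemma madogram_nu_le_half:
  assumes "finite x" "finite y" "\<alpha> \<ge> 0" "\<beta> \<ge> 0"
  shows "madogram_nu M Z \<alpha> \<beta> x y \<le> 1/2"
proof -
  define A where "A = (\<lambda>\<omega>. frechet_cdf (region_max Z x \<omega>) powr \<alpha>)"
  define B where "B = (\<lambda>\<omega>. frechet_cdf (region_max Z y \<omega>) powr \<beta>)"
  have "\<bar>A \<omega> - B \<omega>\<bar> \<le> 1" for \<omega>
    using frechet_cdf_powr_le_1[OF \<open>\<alpha> \<ge> 0\<close>, of "region_max Z x \<omega>"]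
      frechet_cdf_powr_le_1[OF \<open>\<beta> \<ge> 0\<close>, of "region_max Z y \<omega>"]
      powr_ge_zero[of "frechet_cdf (region_max Z x \<omega>)" \<alpha>] powr_ge_zero[of "frechet_cdf (region_max Z y \<omega>)" \<beta>]
    unfolding A_def B_def abs_le_iff by linarith
  moreover have "integrable M A" "integrable M B"
    using assms by (simp_all add: A_def B_def integrable_frechet_cdf_powr_region_max)
  ultimately have "expectation (\<lambda>\<omega>. \<bar>A \<omega> - B \<omega>\<bar>) \<le> 1"
    using integral_mono[of M "\<lambda>\<omega>. \<bar>A \<omega> - B \<omega>\<bar>" "\<lambda>_. 1"] by (simp add: prob_space)
  then show ?thesis
    unfolding madogram_nu_def A_def B_def by simp
qed

lemma madogram_nu_same_exponent:
  assumes "finite x" "x \<noteq> {}" "finite y" "y \<noteq> {}" "\<alpha> \<ge> 0"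
  shows "madogram_nu M Z \<alpha> \<alpha> x y
           = expectation (\<lambda>\<omega>. frechet_cdf (region_max Z (x \<union> y) \<omega>) powr \<alpha>)
             - 1/2 * (expectation (\<lambda>\<omega>. frechet_cdf (region_max Z x \<omega>) powr \<alpha>)
                      + expectation (\<lambda>\<omega>. frechet_cdf (region_max Z y \<omega>) powr \<alpha>))"
proof -
  define F where "F w = (\<lambda>\<omega>. frechet_cdf (region_max Z w \<omega>) powr \<alpha>)" for w
  have "F (x \<union> y) \<omega> = max (F x \<omega>) (F y \<omega>)" for \<omega>
    using assms max_of_mono[OF mono_frechet_cdf_powr[of \<alpha>]] by (simp add: F_def region_max_Un)
  then have "\<bar>F x \<omega> - F y \<omega>\<bar> = 2 * F (x \<union> y) \<omega> - F x \<omega> - F y \<omega>" for \<omega>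
    by (simp add: max_def)
  moreover have "integrable M (F w)" if "finite w" for w
    using that assms by (simp add: F_def integrable_frechet_cdf_powr_region_max)
  ultimately have "expectation (\<lambda>\<omega>. \<bar>F x \<omega> - F y \<omega>\<bar>)
                     = 2 * expectation (F (x \<union> y)) - expectation (F x) - expectation (F y)"
    using assms by simp
  moreover have "madogram_nu M Z \<alpha> \<alpha> x y = 1/2 * expectation (\<lambda>\<omega>. \<bar>F x \<omega> - F y \<omega>\<bar>)"
    by (simp add: madogram_nu_def F_def)
  ultimately show ?thesis
    unfolding F_def by (simp add: field_simps)
qed

end

theorem proposition2p2:
  fixes M :: "'a measure" and Z :: "real^2 \<Rightarrow> 'a \<Rightarrow> real"
    and x y :: "(real^2) set" and \<alpha> \<beta> :: real
  assumes "prob_space M"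
    and "max_stable M Z"
    and "\<And>u z. z > 0 \<Longrightarrow> measure M {\<omega> \<in> space M. Z u \<omega> \<le> z} = frechet_cdf z"
    and "finite x" "x \<noteq> {}" "finite y" "y \<noteq> {}" "x \<inter> y = {}"
    and "\<alpha> > 0" "\<beta> > 0"
  shows "0 \<le> madogram_nu M Z \<alpha> \<beta> x y \<and> madogram_nu M Z \<alpha> \<beta> x y \<le> 1/2 \<and>
         madogram_nu M Z \<alpha> \<alpha> x y =
           extremal_coeff M Z (x \<union> y) / (\<alpha> + extremal_coeff M Z (x \<union> y))
           - 1/2 * (extremal_coeff M Z x / (\<alpha> + extremal_coeff M Z x)
                    + extremal_coeff M Z y / (\<alpha> + extremal_coeff M Z y))"
proof -
  interpret unit_frechet_max_stable M Z
    using assms(1-3) by (intro unit_frechet_max_stable.intro unit_frechet_max_stable_axioms.intro)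
  have "0 \<le> madogram_nu M Z \<alpha> \<beta> x y"
    by (simp add: madogram_nu_def)
  moreover have "madogram_nu M Z \<alpha> \<beta> x y \<le> 1/2"
    using assms by (intro madogram_nu_le_half) auto
  moreover have "madogram_nu M Z \<alpha> \<alpha> x y =
           extremal_coeff M Z (x \<union> y) / (\<alpha> + extremal_coeff M Z (x \<union> y))
           - 1/2 * (extremal_coeff M Z x / (\<alpha> + extremal_coeff M Z x)
                    + extremal_coeff M Z y / (\<alpha> + extremal_coeff M Z y))"
    using assms by (simp add: madogram_nu_same_exponent expectation_frechet_cdf_powr_region_max)
  ultimately show ?thesis
    by blast
qed

end
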